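(* Let $k\in\mathbb{N}$, $f\in\mathcal{S}(\mathbb{R}^d)$, $(\xi_x)_{x\in\mathbb{Z}^d}$ i.i.d. $\mathbb{R}^d$-valued random variables, and $U$ uniform on $[-1/2,1/2]^d$ independent of $(\xi_x)$. Then $$\mathbb{E}\left[\left(\sum_{x\in\mathbb{Z}^d}|f|(x+\xi_x+U)\right)^k\right]+\mathbb{E}\left[\left(\sum_{x\in\mathbb{Z}^d}|f|(x+\xi_x)\right)^k\right]<\infty.$$
   Context: $\mathcal{S}(\mathbb{R}^d)$ is the Schwartz space. *)

theory Defs
  imports "HOL-Probability.Probability"
begin

definition lattice :: "'a::euclidean_space set" where
  "lattice = {x. \<forall>i\<in>Basis. x \<bullet> i \<in> \<int>}"

definition unit_cube :: "'a::euclidean_space set" where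
  "unit_cube = {x. \<forall>i\<in>Basis. -1/2 \<le> x \<bullet> i \<and> x \<bullet> i \<le> 1/2}"

inductive_set iter_partials :: "('a::euclidean_space \<Rightarrow> complex) \<Rightarrow> ('a \<Rightarrow> complex) set"
  for f where
  base: "f \<in> iter_partials f"
| step: "g \<in> iter_partials f \<Longrightarrow> i \<in> Basis \<Longrightarrow>
         (\<lambda>x. frechet_derivative g (at x) i) \<in> iter_partials f"

definition schwartz :: "('a::euclidean_space \<Rightarrow> complex) set" where
  "schwartz = {f. \<forall>g\<in>iter_partials f.
      (\<forall>x. g differentiable (at x)) \<and>
      (\<forall>n::nat. bounded (range (\<lambda>x. (1 + norm x) ^ n *\<^sub>R g x)))}"

end

theory Submission
  imports Defs
begin

text \<open>A Schwartz function satisfies |f(y)| <= C w(y) with w(y) = prod_i (1 + |y_i|)^(-2) (the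
  function decay below). For every y the lattice sum sum_x w(x + y) is bounded by K = 7^d, and a
  shift by a point of the cube [-1/2,1/2]^d changes w by at most the factor (9/4)^d (Peetre's
  inequality). Hence both sums are dominated by c sum_x Y_x, where the Y_x = w(x + xi_x) are
  independent, take values in [0,1], and, the xi_x being identically distributed, satisfy
  sum_x E Y_x = E sum_x w(x + xi_0) <= K.
  Over a finite set of sites, s^k <= k! e^s and independence give
  E (sum Y_x)^k <= k! prod E e^(Y_x) <= k! prod (1 + 2 E Y_x) <= k! e^(2K),
  and monotone convergence extends the bound to the whole lattice.\<close>

definition decay_1d :: "real \<Rightarrow> real" where
  "decay_1d t = 1 / (1 + \<bar>t\<bar>)\<^sup>2"

definition decay :: "'a::euclidean_space \<Rightarrow> real" where
  "decay y = (\<Prod>i\<in>Basis. decay_1d (y \<bullet> i))"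

lemma decay_1d_nonneg: "0 \<le> decay_1d t"
  and decay_1d_le_1: "decay_1d t \<le> 1"
  unfolding decay_1d_def by (auto simp: field_simps)

lemma decay_1d_add_le: "decay_1d (t + s) \<le> (1 + \<bar>s\<bar>)\<^sup>2 * decay_1d t"
proof -
  have "\<bar>t\<bar> \<le> \<bar>t + s\<bar> + \<bar>s\<bar>"
    by arith
  moreover have "(1 + \<bar>s\<bar>) * (1 + \<bar>t + s\<bar>) = 1 + \<bar>t + s\<bar> + \<bar>s\<bar> + \<bar>s\<bar> * \<bar>t + s\<bar>"
    by (simp add: algebra_simps)
  ultimately have "1 + \<bar>t\<bar> \<le> (1 + \<bar>s\<bar>) * (1 + \<bar>t + s\<bar>)"
    by (smt (verit) abs_ge_zero mult_nonneg_nonneg)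
  then have "(1 + \<bar>t\<bar>)\<^sup>2 \<le> ((1 + \<bar>s\<bar>) * (1 + \<bar>t + s\<bar>))\<^sup>2"
    by (rule power_mono) simp
  moreover have "0 < 1 + \<bar>t\<bar>" and "0 < 1 + \<bar>t + s\<bar>"
    by simp_all
  ultimately show ?thesis
    by (simp add: decay_1d_def power_mult_distrib divide_simps mult.commute)
qed

lemma decay_1d_add_le_half:
  assumes "\<bar>s\<bar> \<le> 1/2"
  shows "decay_1d (t + s) \<le> 9/4 * decay_1d t"
proof -
  have "(1 + \<bar>s\<bar>)\<^sup>2 \<le> (3/2)\<^sup>2"
    using assms by (intro power_mono) auto
  then have "(1 + \<bar>s\<bar>)\<^sup>2 * decay_1d t \<le> 9/4 * decay_1d t"
    by (intro mult_right_mono decay_1d_nonneg) (simp add: power2_eq_square)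
  with decay_1d_add_le[of t s] show ?thesis
    by simp
qed

text \<open>The term 2/(N + 1) is what makes the induction work: 2/(N + 2)^2 <= 2/(N + 1) - 2/(N + 2).\<close>

lemma sum_decay_1d_symmetric_interval:
  "(\<Sum>n\<in>{-int N..int N}. decay_1d (of_int n)) \<le> 3 - 2 / (real N + 1)"
proof (induction N)
  case 0
  then show ?case by (simp add: decay_1d_def)
next
  case (Suc N)
  have "{-int (Suc N)..int (Suc N)} = insert (-int (Suc N)) (insert (int (Suc N)) {-int N..int N})"
    by auto
  then have "(\<Sum>n\<in>{-int (Suc N)..int (Suc N)}. decay_1d (of_int n))
      = 2 / (real N + 2)\<^sup>2 + (\<Sum>n\<in>{-int N..int N}. decay_1d (of_int n))"
    by (simp add: decay_1d_def)
  also have "\<dots> \<le> 2 / (real N + 2)\<^sup>2 + (3 - 2 / (real N + 1))"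
    using Suc by simp
  also have "\<dots> \<le> 3 - 2 / (real (Suc N) + 1)"
  proof -
    have "2 / (real N + 2)\<^sup>2 + 2 / (real N + 2) = (2 * real N + 6) / (real N + 2)\<^sup>2"
      by (simp add: divide_simps power2_eq_square) (simp add: algebra_simps)
    also have "\<dots> \<le> 2 / (real N + 1)"
      by (simp add: divide_simps power2_eq_square) (simp add: algebra_simps)
    finally show ?thesis
      by (simp add: add.commute)
  qed
  finally show ?case .
qed

lemma sum_decay_1d_int_le:
  assumes "finite T"
  shows "(\<Sum>n\<in>T. decay_1d (of_int n)) \<le> 3"
proof -
  obtain N where "\<forall>n\<in>T. nat \<bar>n\<bar> \<le> N"
    using finite_nat_set_iff_bounded_le[of "(\<lambda>n. nat \<bar>n\<bar>) ` T"] assms by auto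
  then have "T \<subseteq> {-int N..int N}"
    by force
  then have "(\<Sum>n\<in>T. decay_1d (of_int n)) \<le> (\<Sum>n\<in>{-int N..int N}. decay_1d (of_int n))"
    by (intro sum_mono2) (auto simp: decay_1d_nonneg)
  also have "\<dots> \<le> 3 - 2 / (real N + 1)"
    by (rule sum_decay_1d_symmetric_interval)
  also have "\<dots> \<le> 3"
    by simp
  finally show ?thesis .
qed

lemma sum_decay_1d_int_shift_le:
  assumes "finite T"
  shows "(\<Sum>n\<in>T. decay_1d (of_int n + t)) \<le> 7"
proof -
  define r where "r = round t"
  have r: "\<bar>t - of_int r\<bar> \<le> 1/2"
    unfolding r_def using of_int_round_abs_le[of t] by (simp add: abs_minus_commute)
  have "(\<Sum>n\<in>T. decay_1d (of_int n + t)) \<le> (\<Sum>n\<in>T. 9/4 * decay_1d (of_int (n + r)))"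
  proof (rule sum_mono)
    fix n
    have "of_int n + t = of_int (n + r) + (t - of_int r)"
      by simp
    then show "decay_1d (of_int n + t) \<le> 9/4 * decay_1d (of_int (n + r))"
      using decay_1d_add_le_half[OF r] by metis
  qed
  also have "\<dots> = 9/4 * (\<Sum>m\<in>(\<lambda>n. n + r) ` T. decay_1d (of_int m))"
    by (simp add: sum_distrib_left sum.reindex)
  also have "\<dots> \<le> 9/4 * 3"
    using sum_decay_1d_int_le[of "(\<lambda>n. n + r) ` T"] assms by simp
  finally show ?thesis
    by simp
qed

lemma decay_nonneg: "0 \<le> decay y"
  unfolding decay_def by (intro prod_nonneg) (simp add: decay_1d_nonneg)

lemma decay_le_1: "decay y \<le> 1"
  unfolding decay_def by (intro prod_le_1) (simp add: decay_1d_nonneg decay_1d_le_1)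

lemma borel_measurable_decay [measurable]: "decay \<in> borel_measurable borel"
  unfolding decay_def decay_1d_def by measurable

lemma decay_add_unit_cube_le:
  fixes y u :: "'a::euclidean_space"
  assumes "u \<in> unit_cube"
  shows "decay (y + u) \<le> (9/4) ^ DIM('a) * decay y"
proof -
  have "decay (y + u) = (\<Prod>i\<in>Basis. decay_1d (y \<bullet> i + u \<bullet> i))"
    by (simp add: decay_def inner_add_left)
  also have "\<dots> \<le> (\<Prod>i\<in>Basis. 9/4 * decay_1d (y \<bullet> i))"
    using assms by (intro prod_mono conjI decay_1d_nonneg decay_1d_add_le_half) (auto simp: unit_cube_def)
  also have "\<dots> = (9/4) ^ DIM('a) * decay y"
    unfolding decay_def by (subst prod.distrib) simp
  finally show ?thesis .
qed

definition lattice_coords :: "'a::euclidean_space \<Rightarrow> 'a \<Rightarrow> int" where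
  "lattice_coords x = restrict (\<lambda>i. \<lfloor>x \<bullet> i\<rfloor>) Basis"

lemma lattice_inner_Basis_eq_floor:
  "x \<in> lattice \<Longrightarrow> i \<in> Basis \<Longrightarrow> x \<bullet> i = of_int \<lfloor>x \<bullet> i\<rfloor>"
  unfolding lattice_def by (auto elim!: Ints_cases)

lemma inj_on_lattice_coords: "inj_on lattice_coords lattice"
proof (rule inj_onI)
  fix x y :: 'a
  assume x: "x \<in> lattice" and y: "y \<in> lattice" and eq: "lattice_coords x = lattice_coords y"
  show "x = y"
  proof (rule euclidean_eqI)
    fix i :: 'a
    assume i: "i \<in> Basis"
    then have "\<lfloor>x \<bullet> i\<rfloor> = \<lfloor>y \<bullet> i\<rfloor>"
      using fun_cong[OF eq, of i] by (simp add: lattice_coords_def)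
    then show "x \<bullet> i = y \<bullet> i"
      using lattice_inner_Basis_eq_floor[OF x i] lattice_inner_Basis_eq_floor[OF y i] by simp
  qed
qed

lemma countable_lattice: "countable lattice"
proof (rule countable_image_inj_on[OF _ inj_on_lattice_coords])
  have "lattice_coords ` lattice \<subseteq> Pi\<^sub>E Basis (\<lambda>_. UNIV)"
    by (auto simp: lattice_coords_def)
  then show "countable (lattice_coords ` lattice)"
    by (rule countable_subset) (simp add: countable_PiE)
qed

lemma sum_decay_lattice_le:
  fixes F :: "'a::euclidean_space set"
  assumes "finite F" "F \<subseteq> lattice"
  shows "(\<Sum>x\<in>F. decay (x + y)) \<le> 7 ^ DIM('a)"
proof -
  define S where "S = (\<Union>i\<in>(Basis::'a set). (\<lambda>x. \<lfloor>x \<bullet> i\<rfloor>) ` F)"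
  have "finite S"
    unfolding S_def using assms by auto
  have "(\<Sum>x\<in>F. decay (x + y)) = (\<Sum>x\<in>F. \<Prod>i\<in>Basis. decay_1d (of_int (lattice_coords x i) + y \<bullet> i))"
    unfolding decay_def using assms(2)
    by (intro sum.cong prod.cong refl)
      (auto simp: lattice_coords_def inner_add_left lattice_inner_Basis_eq_floor[symmetric])
  also have "\<dots> = (\<Sum>g\<in>lattice_coords ` F. \<Prod>i\<in>Basis. decay_1d (of_int (g i) + y \<bullet> i))"
    using inj_on_subset[OF inj_on_lattice_coords assms(2)] by (simp add: sum.reindex)
  also have "\<dots> \<le> (\<Sum>g\<in>Pi\<^sub>E Basis (\<lambda>_. S). \<Prod>i\<in>Basis. decay_1d (of_int (g i) + y \<bullet> i))"
    using \<open>finite S\<close>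
    by (intro sum_mono2 prod_nonneg) (auto simp: finite_PiE S_def lattice_coords_def decay_1d_nonneg)
  also have "\<dots> = (\<Prod>i\<in>Basis. \<Sum>n\<in>S. decay_1d (of_int n + y \<bullet> i))"
    by (rule prod_sum_PiE[symmetric]) (simp_all add: \<open>finite S\<close>)
  also have "\<dots> \<le> (\<Prod>i\<in>(Basis::'a set). 7)"
    using \<open>finite S\<close>
    by (intro prod_mono conjI sum_nonneg sum_decay_1d_int_shift_le) (simp_all add: decay_1d_nonneg)
  finally show ?thesis
    by simp
qed

lemma schwartz_le_decay:
  fixes f :: "'a::euclidean_space \<Rightarrow> complex"
  assumes "f \<in> schwartz"
  obtains C where "0 \<le> C" and "\<And>y. cmod (f y) \<le> C * decay y"
proof -
  have "bounded (range (\<lambda>x. (1 + norm x) ^ (2 * DIM('a)) *\<^sub>R f x))"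
    using assms iter_partials.base[of f] unfolding schwartz_def by blast
  then obtain C where C: "\<And>x. norm ((1 + norm x) ^ (2 * DIM('a)) *\<^sub>R f x) \<le> C"
    unfolding bounded_iff by blast
  show thesis
  proof
    show "0 \<le> C"
      using C[of 0] norm_ge_zero order_trans by blast
    fix y :: 'a
    have "(\<Prod>i\<in>(Basis::'a set). (1 + \<bar>y \<bullet> i\<bar>)\<^sup>2) \<le> (\<Prod>i\<in>(Basis::'a set). (1 + norm y)\<^sup>2)"
      by (intro prod_mono conjI power_mono) (auto simp: Basis_le_norm)
    also have "\<dots> = (1 + norm y) ^ (2 * DIM('a))"
      by (simp add: power_mult)
    finally have "(\<Prod>i\<in>(Basis::'a set). (1 + \<bar>y \<bullet> i\<bar>)\<^sup>2) \<le> (1 + norm y) ^ (2 * DIM('a))" .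
    moreover have "(1 + norm y) ^ (2 * DIM('a)) * cmod (f y) \<le> C"
      using C[of y] by simp
    ultimately have "(\<Prod>i\<in>(Basis::'a set). (1 + \<bar>y \<bullet> i\<bar>)\<^sup>2) * cmod (f y) \<le> C"
      by (meson mult_right_mono norm_ge_zero order_trans)
    moreover have "0 < (\<Prod>i\<in>(Basis::'a set). (1 + \<bar>y \<bullet> i\<bar>)\<^sup>2)"
      by (intro prod_pos) simp
    ultimately show "cmod (f y) \<le> C * decay y"
      by (simp add: decay_def decay_1d_def prod_dividef field_simps)
  qed
qed

lemma sup_continuous_mult_ennreal [order_continuous_intros]:
  fixes f g :: "'a::complete_lattice \<Rightarrow> ennreal"
  assumes f: "sup_continuous f" and g: "sup_continuous g"
  shows "sup_continuous (\<lambda>x. f x * g x)"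
  unfolding sup_continuous_def
proof safe
  fix M :: "nat \<Rightarrow> 'a"
  assume "mono M"
  then have mono_fM: "mono (\<lambda>i. f (M i))" and mono_gM: "mono (\<lambda>i. g (M i))"
    using sup_continuous_mono[OF f] sup_continuous_mono[OF g] by (auto simp: mono_def)
  have "f (SUP i. M i) * g (SUP i. M i) = (SUP i. SUP j. f (M i) * g (M j))"
    by (simp add: sup_continuousD[OF f \<open>mono M\<close>] sup_continuousD[OF g \<open>mono M\<close>]
        SUP_mult_left_ennreal SUP_mult_right_ennreal) (rule SUP_commute)
  also have "\<dots> = (SUP n. f (M n) * g (M n))"
  proof (rule antisym)
    show "(SUP i. SUP j. f (M i) * g (M j)) \<le> (SUP n. f (M n) * g (M n))"
    proof (intro SUP_least)
      fix i j :: nat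
      have "f (M i) * g (M j) \<le> f (M (max i j)) * g (M (max i j))"
        using mono_fM mono_gM by (intro mult_mono) (auto simp: mono_def)
      also have "\<dots> \<le> (SUP n. f (M n) * g (M n))"
        by (rule SUP_upper) simp
      finally show "f (M i) * g (M j) \<le> (SUP n. f (M n) * g (M n))" .
    qed
    show "(SUP n. f (M n) * g (M n)) \<le> (SUP i. SUP j. f (M i) * g (M j))"
    proof (rule SUP_least)
      fix n
      have "f (M n) * g (M n) \<le> (SUP j. f (M n) * g (M j))"
        by (rule SUP_upper) simp
      also have "\<dots> \<le> (SUP i. SUP j. f (M i) * g (M j))"
        by (rule SUP_upper) simp
      finally show "f (M n) * g (M n) \<le> (SUP i. SUP j. f (M i) * g (M j))" .
    qed
  qed
  finally show "f (SUP i. M i) * g (SUP i. M i) = (SUP n. f (M n) * g (M n))" .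
qed

lemma sup_continuous_power_ennreal [order_continuous_intros]:
  fixes f :: "'a::complete_lattice \<Rightarrow> ennreal"
  assumes "sup_continuous f"
  shows "sup_continuous (\<lambda>x. f x ^ n)"
  by (induction n) (simp_all add: sup_continuous_const sup_continuous_mult_ennreal assms)

lemma infsum_ennreal_eq_SUP_from_nat_into:
  fixes g :: "'i \<Rightarrow> ennreal"
  assumes "countable I" and "I \<noteq> {}"
  shows "(\<Sum>\<^sub>\<infinity>x\<in>I. g x) = (SUP n. \<Sum>x\<in>from_nat_into I ` {..<n}. g x)"
proof -
  have "(\<Sum>\<^sub>\<infinity>x\<in>I. g x) = (SUP G\<in>{G. finite G \<and> G \<subseteq> I}. \<Sum>x\<in>G. g x)"
    by (rule nonneg_infsum_complete) simp
  also have "\<dots> = (SUP n. \<Sum>x\<in>from_nat_into I ` {..<n}. g x)"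
  proof (rule antisym)
    show "(SUP G\<in>{G. finite G \<and> G \<subseteq> I}. \<Sum>x\<in>G. g x) \<le> (SUP n. \<Sum>x\<in>from_nat_into I ` {..<n}. g x)"
    proof (rule SUP_least)
      fix G
      assume "G \<in> {G. finite G \<and> G \<subseteq> I}"
      then have "finite G" and "G \<subseteq> I"
        by auto
      then obtain n where "to_nat_on I ` G \<subseteq> {..<n}"
        using finite_nat_iff_bounded by blast
      then have "G \<subseteq> from_nat_into I ` {..<n}"
        using \<open>G \<subseteq> I\<close> assms(1) by (force simp: image_iff)
      then have "(\<Sum>x\<in>G. g x) \<le> (\<Sum>x\<in>from_nat_into I ` {..<n}. g x)"
        by (intro sum_mono2) auto
      also have "\<dots> \<le> (SUP n. \<Sum>x\<in>from_nat_into I ` {..<n}. g x)"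
        by (rule SUP_upper) simp
      finally show "(\<Sum>x\<in>G. g x) \<le> (SUP n. \<Sum>x\<in>from_nat_into I ` {..<n}. g x)" .
    qed
    show "(SUP n. \<Sum>x\<in>from_nat_into I ` {..<n}. g x) \<le> (SUP G\<in>{G. finite G \<and> G \<subseteq> I}. \<Sum>x\<in>G. g x)"
      by (intro SUP_least SUP_upper) (auto simp: from_nat_into[OF assms(2)])
  qed
  finally show ?thesis .
qed

lemma borel_measurable_infsum_ennreal [measurable (raw)]:
  fixes g :: "'i \<Rightarrow> 'a \<Rightarrow> ennreal"
  assumes "countable I" and "\<And>x. x \<in> I \<Longrightarrow> g x \<in> borel_measurable M"
  shows "(\<lambda>\<omega>. \<Sum>\<^sub>\<infinity>x\<in>I. g x \<omega>) \<in> borel_measurable M"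
proof (cases "I = {}")
  case False
  have "(\<lambda>\<omega>. SUP n. \<Sum>x\<in>from_nat_into I ` {..<n}. g x \<omega>) \<in> borel_measurable M"
    using assms(2) from_nat_into[OF False] by (intro borel_measurable_SUP borel_measurable_sum) auto
  then show ?thesis
    by (simp add: infsum_ennreal_eq_SUP_from_nat_into[OF assms(1) False])
qed simp

lemma nn_integral_power_infsum_le:
  fixes g :: "'i \<Rightarrow> 'a \<Rightarrow> ennreal"
  assumes "countable I" and [measurable]: "\<And>x. x \<in> I \<Longrightarrow> g x \<in> borel_measurable M"
    and finite_bound: "\<And>F. finite F \<Longrightarrow> F \<subseteq> I \<Longrightarrow> (\<integral>\<^sup>+\<omega>. (\<Sum>x\<in>F. g x \<omega>) ^ k \<partial>M) \<le> B"
  shows "(\<integral>\<^sup>+\<omega>. (\<Sum>\<^sub>\<infinity>x\<in>I. g x \<omega>) ^ k \<partial>M) \<le> B"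
proof (cases "I = {}")
  case True
  then show ?thesis
    using finite_bound[of "{}"] by simp
next
  case False
  define F where "F n = from_nat_into I ` {..<n}" for n
  have F: "finite (F n)" "F n \<subseteq> I" for n
    by (auto simp: F_def from_nat_into[OF False])
  have mono_partial_sums: "mono (\<lambda>n. \<Sum>x\<in>F n. g x \<omega>)" for \<omega>
    by (auto simp: F_def intro!: monoI sum_mono2 image_mono)
  have "(\<integral>\<^sup>+\<omega>. (\<Sum>\<^sub>\<infinity>x\<in>I. g x \<omega>) ^ k \<partial>M) = (\<integral>\<^sup>+\<omega>. (SUP n. (\<Sum>x\<in>F n. g x \<omega>) ^ k) \<partial>M)"
    using sup_continuousD[OF sup_continuous_power_ennreal[OF sup_continuous_id] mono_partial_sums]
    by (simp add: infsum_ennreal_eq_SUP_from_nat_into[OF assms(1) False] F_def)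
  also have "\<dots> = (SUP n. \<integral>\<^sup>+\<omega>. (\<Sum>x\<in>F n. g x \<omega>) ^ k \<partial>M)"
  proof (rule nn_integral_monotone_convergence_SUP)
    show "incseq (\<lambda>n \<omega>. (\<Sum>x\<in>F n. g x \<omega>) ^ k)"
      using mono_partial_sums by (auto simp: incseq_def le_fun_def mono_def intro!: power_mono_ennreal)
    show "(\<lambda>\<omega>. (\<Sum>x\<in>F n. g x \<omega>) ^ k) \<in> borel_measurable M" for n
      using F(2) by (intro borel_measurable_power_ennreal borel_measurable_sum assms(2)) auto
  qed
  also have "\<dots> \<le> B"
    using F by (intro SUP_least finite_bound)
  finally show ?thesis .
qed

lemma nn_integral_power_dominated_less_top:
  fixes S g :: "'a \<Rightarrow> ennreal"
  assumes "S \<in> borel_measurable M" and "(\<integral>\<^sup>+\<omega>. S \<omega> ^ k \<partial>M) < \<infinity>"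
    and "AE \<omega> in M. g \<omega> \<le> ennreal c * S \<omega>"
  shows "(\<integral>\<^sup>+\<omega>. g \<omega> ^ k \<partial>M) < \<infinity>"
proof -
  have "(\<integral>\<^sup>+\<omega>. g \<omega> ^ k \<partial>M) \<le> (\<integral>\<^sup>+\<omega>. ennreal c ^ k * S \<omega> ^ k \<partial>M)"
    using assms(3) by (intro nn_integral_mono_AE) (auto simp: power_mult_distrib[symmetric] power_mono_ennreal)
  also have "\<dots> = ennreal c ^ k * (\<integral>\<^sup>+\<omega>. S \<omega> ^ k \<partial>M)"
    using assms(1) by (intro nn_integral_cmult) measurable
  also have "\<dots> < \<infinity>"
    using assms(2) by (simp add: ennreal_mult_less_top power_less_top_ennreal)
  finally show ?thesis .
qed

lemma infsum_cmult_right_ennreal: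
  fixes g :: "'i \<Rightarrow> ennreal"
  shows "(\<Sum>\<^sub>\<infinity>x\<in>A. c * g x) = c * (\<Sum>\<^sub>\<infinity>x\<in>A. g x)"
proof -
  have "(\<Sum>\<^sub>\<infinity>x\<in>A. c * g x) = (SUP F\<in>{F. finite F \<and> F \<subseteq> A}. c * (\<Sum>x\<in>F. g x))"
    by (subst nonneg_infsum_complete) (simp_all add: sum_distrib_left)
  also have "\<dots> = c * (\<Sum>\<^sub>\<infinity>x\<in>A. g x)"
    by (subst nonneg_infsum_complete) (simp_all add: SUP_mult_left_ennreal)
  finally show ?thesis .
qed

lemma infsum_ennreal_le_cmult:
  fixes f g :: "'i \<Rightarrow> real"
  assumes "0 \<le> c" and "\<And>x. x \<in> A \<Longrightarrow> f x \<le> c * g x"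
  shows "(\<Sum>\<^sub>\<infinity>x\<in>A. ennreal (f x)) \<le> ennreal c * (\<Sum>\<^sub>\<infinity>x\<in>A. ennreal (g x))"
proof -
  have "(\<Sum>\<^sub>\<infinity>x\<in>A. ennreal (f x)) \<le> (\<Sum>\<^sub>\<infinity>x\<in>A. ennreal c * ennreal (g x))"
    using assms
    by (intro infsum_mono nonneg_summable_on_complete) (simp_all add: ennreal_mult'[symmetric] ennreal_leI)
  also have "\<dots> = ennreal c * (\<Sum>\<^sub>\<infinity>x\<in>A. ennreal (g x))"
    by (rule infsum_cmult_right_ennreal)
  finally show ?thesis .
qed

lemma power_le_fact_mult_exp:
  fixes s :: real
  assumes "0 \<le> s"
  shows "s ^ k \<le> fact k * exp s"
proof -
  have "s ^ k / fact k = (\<Sum>n\<in>{k}. s ^ n /\<^sub>R fact n)"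
    by (simp add: divide_inverse mult.commute)
  also have "\<dots> \<le> (\<Sum>n. s ^ n /\<^sub>R fact n)"
    using assms by (intro sum_le_suminf summable_exp_generic) auto
  also have "\<dots> = exp s"
    by (simp add: exp_def)
  finally show ?thesis
    by (simp add: divide_le_eq mult.commute)
qed

lemma exp_le_one_plus_twice:
  fixes a :: real
  assumes "0 \<le> a" and "a \<le> 1"
  shows "exp a \<le> 1 + 2 * a"
proof -
  have "exp a \<le> 1 + a + a\<^sup>2"
    by (rule exp_bound[OF assms])
  moreover have "a\<^sup>2 \<le> a"
    using assms by (simp add: power2_eq_square mult_left_le)
  ultimately show ?thesis
    by linarith
qed

lemma (in prob_space) nn_integral_power_sum_indep_le:
  fixes Y :: "'i \<Rightarrow> 'a \<Rightarrow> real"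
  assumes "finite F" and indep: "indep_vars (\<lambda>_. borel) Y F"
    and bounds: "\<And>x \<omega>. x \<in> F \<Longrightarrow> 0 \<le> Y x \<omega> \<and> Y x \<omega> \<le> 1"
  shows "(\<integral>\<^sup>+\<omega>. ennreal ((\<Sum>x\<in>F. Y x \<omega>) ^ k) \<partial>M)
    \<le> ennreal (fact k * exp (2 * (\<Sum>x\<in>F. expectation (Y x))))"
proof -
  have [measurable]: "Y x \<in> borel_measurable M" if "x \<in> F" for x
    using indep that by (simp add: indep_vars_def)
  have integrable_Y: "integrable M (Y x)" if "x \<in> F" for x
    using bounds[OF that] that by (intro integrable_const_bound[where B=1]) auto
  have integrable_exp_Y: "integrable M (\<lambda>\<omega>. exp (Y x \<omega>))" if "x \<in> F" for x
    using bounds[OF that] that by (intro integrable_const_bound[where B="exp 1"]) auto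
  have indep_exp_Y: "indep_vars (\<lambda>_. borel) (\<lambda>x \<omega>. exp (Y x \<omega>)) F"
    using indep by (rule indep_vars_compose2) measurable
  have expectation_exp_Y: "expectation (\<lambda>\<omega>. exp (Y x \<omega>)) \<le> exp (2 * expectation (Y x))"
    if "x \<in> F" for x
  proof -
    have "expectation (\<lambda>\<omega>. exp (Y x \<omega>)) \<le> expectation (\<lambda>\<omega>. 1 + 2 * Y x \<omega>)"
      using integrable_exp_Y[OF that] integrable_Y[OF that] bounds[OF that]
      by (intro integral_mono exp_le_one_plus_twice) auto
    also have "\<dots> = 1 + 2 * expectation (Y x)"
      using integrable_Y[OF that] by (simp add: prob_space)
    also have "\<dots> \<le> exp (2 * expectation (Y x))"
      by (rule exp_ge_add_one_self)
    finally show ?thesis .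
  qed
  have "(\<integral>\<^sup>+\<omega>. ennreal ((\<Sum>x\<in>F. Y x \<omega>) ^ k) \<partial>M)
      \<le> (\<integral>\<^sup>+\<omega>. ennreal (fact k * (\<Prod>x\<in>F. exp (Y x \<omega>))) \<partial>M)"
  proof (intro nn_integral_mono ennreal_leI)
    fix \<omega>
    have "(\<Sum>x\<in>F. Y x \<omega>) ^ k \<le> fact k * exp (\<Sum>x\<in>F. Y x \<omega>)"
      by (intro power_le_fact_mult_exp sum_nonneg) (simp add: bounds)
    then show "(\<Sum>x\<in>F. Y x \<omega>) ^ k \<le> fact k * (\<Prod>x\<in>F. exp (Y x \<omega>))"
      by (simp add: exp_sum \<open>finite F\<close>)
  qed
  also have "\<dots> = ennreal (expectation (\<lambda>\<omega>. fact k * (\<Prod>x\<in>F. exp (Y x \<omega>))))"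
    using indep_vars_integrable[OF \<open>finite F\<close> indep_exp_Y integrable_exp_Y]
    by (intro nn_integral_eq_integral) (auto intro!: AE_I2 mult_nonneg_nonneg prod_nonneg)
  also have "\<dots> = ennreal (fact k * (\<Prod>x\<in>F. expectation (\<lambda>\<omega>. exp (Y x \<omega>))))"
    using indep_vars_lebesgue_integral[OF \<open>finite F\<close> indep_exp_Y integrable_exp_Y] by simp
  also have "\<dots> \<le> ennreal (fact k * (\<Prod>x\<in>F. exp (2 * expectation (Y x))))"
    using expectation_exp_Y
    by (intro ennreal_leI mult_left_mono prod_mono) (auto intro: integral_nonneg_AE)
  also have "\<dots> = ennreal (fact k * exp (2 * (\<Sum>x\<in>F. expectation (Y x))))"
    using \<open>finite F\<close> by (simp add: exp_sum sum_distrib_left)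
  finally show ?thesis .
qed

lemma (in prob_space) sum_expectation_decay_lattice_le:
  fixes \<xi> :: "'e::euclidean_space \<Rightarrow> 'a \<Rightarrow> 'e" and Z :: "'a \<Rightarrow> 'e"
  assumes "finite F" and "F \<subseteq> lattice" and [measurable]: "random_variable borel Z"
    and [measurable]: "\<And>x. x \<in> F \<Longrightarrow> random_variable borel (\<xi> x)"
    and same_distr: "\<And>x. x \<in> F \<Longrightarrow> distr M borel (\<xi> x) = distr M borel Z"
  shows "(\<Sum>x\<in>F. expectation (\<lambda>\<omega>. decay (x + \<xi> x \<omega>))) \<le> 7 ^ DIM('e)"
proof -
  have "expectation (\<lambda>\<omega>. decay (x + \<xi> x \<omega>)) = expectation (\<lambda>\<omega>. decay (x + Z \<omega>))"
    if "x \<in> F" for x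
  proof -
    have "expectation (\<lambda>\<omega>. decay (x + \<xi> x \<omega>)) = (\<integral>y. decay (x + y) \<partial>distr M borel (\<xi> x))"
      using that by (intro integral_distr[symmetric]) auto
    also have "\<dots> = (\<integral>y. decay (x + y) \<partial>distr M borel Z)"
      using same_distr[OF that] by simp
    also have "\<dots> = expectation (\<lambda>\<omega>. decay (x + Z \<omega>))"
      by (intro integral_distr) auto
    finally show ?thesis .
  qed
  then have "(\<Sum>x\<in>F. expectation (\<lambda>\<omega>. decay (x + \<xi> x \<omega>)))
      = (\<Sum>x\<in>F. expectation (\<lambda>\<omega>. decay (x + Z \<omega>)))"
    by simp
  also have "\<dots> = expectation (\<lambda>\<omega>. \<Sum>x\<in>F. decay (x + Z \<omega>))"
  proof (rule Bochner_Integration.integral_sum[symmetric])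
    show "integrable M (\<lambda>\<omega>. decay (x + Z \<omega>))" for x
      by (rule integrable_const_bound[where B=1]) (auto simp: decay_nonneg decay_le_1)
  qed
  also have "\<dots> \<le> expectation (\<lambda>\<omega>. 7 ^ DIM('e))"
    by (intro integral_mono integrable_const_bound[where B="7 ^ DIM('e)"] AE_I2)
      (auto simp: decay_nonneg sum_nonneg sum_decay_lattice_le[OF assms(1,2)])
  also have "\<dots> = 7 ^ DIM('e)"
    by (simp add: prob_space)
  finally show ?thesis .
qed

lemma (in prob_space) nn_integral_power_lattice_sum_decay_less_top:
  fixes \<xi> :: "'e::euclidean_space \<Rightarrow> 'a \<Rightarrow> 'e"
  assumes indep: "indep_vars (\<lambda>_. borel) \<xi> lattice"
    and same_distr: "\<forall>x\<in>lattice. \<forall>y\<in>lattice. distr M borel (\<xi> x) = distr M borel (\<xi> y)"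
  shows "(\<integral>\<^sup>+\<omega>. (\<Sum>\<^sub>\<infinity>x\<in>lattice. ennreal (decay (x + \<xi> x \<omega>))) ^ k \<partial>M) < \<infinity>"
proof -
  have \<xi>_measurable: "\<xi> x \<in> borel_measurable M" if "x \<in> lattice" for x
    using indep that by (simp add: indep_vars_def)
  have decay_\<xi>_measurable: "(\<lambda>\<omega>. ennreal (decay (x + \<xi> x \<omega>))) \<in> borel_measurable M"
    if "x \<in> lattice" for x
    by (rule measurable_compose[OF \<xi>_measurable[OF that], where g="\<lambda>y. ennreal (decay (x + y))"])
      measurable
  have "0 \<in> lattice"
    by (simp add: lattice_def)
  have "(\<integral>\<^sup>+\<omega>. (\<Sum>\<^sub>\<infinity>x\<in>lattice. ennreal (decay (x + \<xi> x \<omega>))) ^ k \<partial>M)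
      \<le> ennreal (fact k * exp (2 * 7 ^ DIM('e)))"
  proof (rule nn_integral_power_infsum_le[OF countable_lattice])
    fix F :: "'e set"
    assume F: "finite F" "F \<subseteq> lattice"
    have indep_F: "indep_vars (\<lambda>_. borel) (\<lambda>x \<omega>. decay (x + \<xi> x \<omega>)) F"
      using indep_vars_subset[OF indep F(2)]
      by (rule indep_vars_compose2[where Y="\<lambda>x y. decay (x + y)"]) measurable
    have "(\<integral>\<^sup>+\<omega>. (\<Sum>x\<in>F. ennreal (decay (x + \<xi> x \<omega>))) ^ k \<partial>M)
        = (\<integral>\<^sup>+\<omega>. ennreal ((\<Sum>x\<in>F. decay (x + \<xi> x \<omega>)) ^ k) \<partial>M)"
      by (simp add: decay_nonneg sum_nonneg sum_ennreal ennreal_power)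
    also have "\<dots> \<le> ennreal (fact k * exp (2 * (\<Sum>x\<in>F. expectation (\<lambda>\<omega>. decay (x + \<xi> x \<omega>)))))"
      using F(1) indep_F by (rule nn_integral_power_sum_indep_le) (simp add: decay_nonneg decay_le_1)
    also have "\<dots> \<le> ennreal (fact k * exp (2 * 7 ^ DIM('e)))"
        using sum_expectation_decay_lattice_le[OF F \<xi>_measurable[OF \<open>0 \<in> lattice\<close>], of \<xi>]
        F(2) \<xi>_measurable same_distr \<open>0 \<in> lattice\<close>
      by (intro ennreal_leI mult_left_mono) auto
    finally show "(\<integral>\<^sup>+\<omega>. (\<Sum>x\<in>F. ennreal (decay (x + \<xi> x \<omega>))) ^ k \<partial>M)
        \<le> ennreal (fact k * exp (2 * 7 ^ DIM('e)))" .
  qed (rule decay_\<xi>_measurable)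
  then show ?thesis
    by (rule le_less_trans) simp
qed

theorem lemma6p4:
  fixes M :: "'b measure"
    and f :: "'a::euclidean_space \<Rightarrow> complex"
    and \<xi> :: "'a \<Rightarrow> 'b \<Rightarrow> 'a"
    and U :: "'b \<Rightarrow> 'a"
    and k :: nat
  assumes "prob_space M"
    and "f \<in> schwartz"
    and "prob_space.indep_vars M (\<lambda>_. borel) \<xi> lattice"
    and "\<forall>x\<in>lattice. \<forall>y\<in>lattice. distr M borel (\<xi> x) = distr M borel (\<xi> y)"
    and "U \<in> borel_measurable M"
    and "distr M borel U = uniform_measure lborel unit_cube"
    and "prob_space.indep_set M
           {U -` A \<inter> space M | A. A \<in> sets borel}
           (sigma_sets (space M) (\<Union>x\<in>lattice. {\<xi> x -` A \<inter> space M | A. A \<in> sets borel}))"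
  shows "(\<integral>\<^sup>+\<omega>. (\<Sum>\<^sub>\<infinity>x\<in>lattice. ennreal (cmod (f (x + \<xi> x \<omega> + U \<omega>)))) ^ k \<partial>M)
       + (\<integral>\<^sup>+\<omega>. (\<Sum>\<^sub>\<infinity>x\<in>lattice. ennreal (cmod (f (x + \<xi> x \<omega>)))) ^ k \<partial>M) < \<infinity>"
proof -
  interpret prob_space M
    by fact
  obtain C where "0 \<le> C" and C: "\<And>y. cmod (f y) \<le> C * decay y"
    using schwartz_le_decay[OF assms(2)] by blast
  let ?S = "\<lambda>\<omega>. \<Sum>\<^sub>\<infinity>x\<in>lattice. ennreal (decay (x + \<xi> x \<omega>))"
  have S_measurable: "?S \<in> borel_measurable M"
  proof (rule borel_measurable_infsum_ennreal[OF countable_lattice])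
    fix x :: 'a
    assume "x \<in> lattice"
    then have "\<xi> x \<in> borel_measurable M"
      using assms(3) by (simp add: indep_vars_def)
    then show "(\<lambda>\<omega>. ennreal (decay (x + \<xi> x \<omega>))) \<in> borel_measurable M"
      by (rule measurable_compose[where g="\<lambda>y. ennreal (decay (x + y))"]) measurable
  qed
  have S_moment: "(\<integral>\<^sup>+\<omega>. ?S \<omega> ^ k \<partial>M) < \<infinity>"
    using assms(3,4) by (rule nn_integral_power_lattice_sum_decay_less_top)
  have "AE \<omega> in M. U \<omega> \<in> unit_cube"
  proof (rule AE_distrD[OF assms(5)])
    show "AE u in distr M borel U. u \<in> unit_cube"
      unfolding assms(6) by (rule AE_uniform_measureI) (simp_all add: unit_cube_def)
  qed
  then have shifted_bound: "AE \<omega> in M. (\<Sum>\<^sub>\<infinity>x\<in>lattice. ennreal (cmod (f (x + \<xi> x \<omega> + U \<omega>))))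
      \<le> ennreal (C * (9/4) ^ DIM('a)) * ?S \<omega>"
  proof eventually_elim
    case (elim \<omega>)
    show ?case
    proof (rule infsum_ennreal_le_cmult)
      fix x
      have "cmod (f (x + \<xi> x \<omega> + U \<omega>)) \<le> C * decay (x + \<xi> x \<omega> + U \<omega>)"
        by (rule C)
      also have "\<dots> \<le> C * ((9/4) ^ DIM('a) * decay (x + \<xi> x \<omega>))"
        using \<open>0 \<le> C\<close> elim by (intro mult_left_mono decay_add_unit_cube_le)
      finally show "cmod (f (x + \<xi> x \<omega> + U \<omega>)) \<le> C * (9/4) ^ DIM('a) * decay (x + \<xi> x \<omega>)"
        by (simp add: mult.assoc)
    qed (use \<open>0 \<le> C\<close> in simp)
  qed
  have unshifted_bound:
    "AE \<omega> in M. (\<Sum>\<^sub>\<infinity>x\<in>lattice. ennreal (cmod (f (x + \<xi> x \<omega>)))) \<le> ennreal C * ?S \<omega>"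
    using \<open>0 \<le> C\<close> C by (intro AE_I2 infsum_ennreal_le_cmult)
  show ?thesis
    using nn_integral_power_dominated_less_top[OF S_measurable S_moment shifted_bound]
      nn_integral_power_dominated_less_top[OF S_measurable S_moment unshifted_bound]
    by simp
qed

end
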